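(* Let $0<b<1$ and $0<\alpha\le 1$. Let $\{Z(t),t\ge0\}$ be an $I_0$-valued Lévy process. Consider the $I_0$-valued first-order autoregressive scheme $$X_n=b\otimes X_{n-1}+\varepsilon_n,\qquad n=1,2,\dots,$$ where $X_0\overset{d}{=}Z(1)$, the innovations $\{\varepsilon_n\}$ are i.i.d. with $\varepsilon_n\overset{d}{=}b\otimes Z(b^{-\alpha}-1)$ for all $n$, and $\varepsilon_n$ is independent of $X_{n-1}$ and of the thinning at step $n$. Then: if $\{Z(t)\}$ is $(b^\alpha,\tfrac1\alpha)$-semi-selfsimilar, the sequence $\{X_n\}$ is stationary with $I_0$-valued semi-stable$(b^\alpha,b)$ marginals. Conversely, if $\{X_n\}$ is stationary, then its marginals are $I_0$-valued semi-stable$(b^\alpha,b)$ and $\{Z(t)\}$ is $(b^\alpha,\tfrac1\alpha)$-semi-selfsimilar.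
   Context: $I_0=\{0,1,2,\dots\}$. A Lévy process is a process with stationary and independent increments and $Z(0)=0$; if $P(s)$ is the probability generating function (PGF) of $Z(1)$ then that of $Z(t)$ is $P(s)^t$. Binomial thinning: for $0<c<1$ and an $I_0$-valued random variable $X$, $c\otimes X=\sum_{i=1}^{X}Y_i$ with $\{Y_i\}$ i.i.d. Bernoulli, independent of $X$, $P\{Y_i=1\}=c$; its PGF is $P(1-c+cs)$ if $X$ has PGF $P(s)$. An $I_0$-valued process $\{Z(t),t\ge0\}$ is $(a,H)$-semi-selfsimilar, with $0<a<1$, $H>0$, if $\{Z(at)\}\overset{d}{=}\{a^H\otimes Z(t)\}$. An $I_0$-valued random variable with PGF $P(s)$ is discrete semi-stable$(a,b)$ if $P(s)\neq0$ and $\{P(s)\}^a=P(1-b+bs)$ for all $0\le s\le1$, with $0<b<1$ and $b=a^{1/\alpha}$, $\alpha\in(0,1]$. All notions are in the strict sense. *)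

theory Defs
  imports "HOL-Probability.Probability"
begin

text \<open>Laws of I_0-valued random variables are modelled as nat pmf's.\<close>

definition pgf :: "nat pmf \<Rightarrow> real \<Rightarrow> real" where
  "pgf p s = measure_pmf.expectation p (\<lambda>n. s ^ n)"

definition thin :: "real \<Rightarrow> nat pmf \<Rightarrow> nat pmf" where
  "thin c p = bind_pmf p (\<lambda>x. binomial_pmf x c)"

text \<open>An I_0-valued Levy process is represented by the family mu t of laws of Z(t):
  Z(0)=0, stationary independent increments (so the laws form a convolution
  semigroup), and (as stated in the context) the PGF of Z(t) is P(s)^t.\<close>
definition levy_process :: "(real \<Rightarrow> nat pmf) \<Rightarrow> bool" where
  "levy_process \<mu> \<longleftrightarrow>
     \<mu> 0 = return_pmf 0 \<and>
     (\<forall>s t. 0 \<le> s \<longrightarrow> 0 \<le> t \<longrightarrow>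
        \<mu> (s + t) = map_pmf (\<lambda>(x, y). x + y) (pair_pmf (\<mu> s) (\<mu> t))) \<and>
     (\<forall>t>0. \<forall>s\<in>{0..1}. pgf (\<mu> t) s = pgf (\<mu> 1) s powr t)"

text \<open>Finite-dimensional law of (Z(t_1),...,Z(t_k)) for 0 \<le> t_1 \<le> ... \<le> t_k,
  built from independent stationary increments starting at Z(0)=0.\<close>
fun levy_fdd_aux :: "(real \<Rightarrow> nat pmf) \<Rightarrow> real \<Rightarrow> nat \<Rightarrow> real list \<Rightarrow> nat list pmf" where
  "levy_fdd_aux \<mu> t0 z0 [] = return_pmf []"
| "levy_fdd_aux \<mu> t0 z0 (t # ts) =
     bind_pmf (\<mu> (t - t0)) (\<lambda>d. map_pmf (\<lambda>zs. (z0 + d) # zs) (levy_fdd_aux \<mu> t (z0 + d) ts))"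

definition levy_fdd :: "(real \<Rightarrow> nat pmf) \<Rightarrow> real list \<Rightarrow> nat list pmf" where
  "levy_fdd \<mu> ts = levy_fdd_aux \<mu> 0 0 ts"

text \<open>Joint law of (c (x) z_1, ..., c (x) z_k) for a nondecreasing path z_1 \<le> ... \<le> z_k,
  all thinned with one common i.i.d. Bernoulli(c) sequence: the thinned values are
  cumulative sums of independent Binomial(z_j - z_{j-1}, c) variables.\<close>
fun thin_path_aux :: "real \<Rightarrow> nat \<Rightarrow> nat \<Rightarrow> nat list \<Rightarrow> nat list pmf" where
  "thin_path_aux c z0 w0 [] = return_pmf []"
| "thin_path_aux c z0 w0 (z # zs) =
     bind_pmf (binomial_pmf (z - z0) c) (\<lambda>d. map_pmf (\<lambda>ws. (w0 + d) # ws) (thin_path_aux c z (w0 + d) zs))"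

definition thin_path :: "real \<Rightarrow> nat list \<Rightarrow> nat list pmf" where
  "thin_path c zs = thin_path_aux c 0 0 zs"

text \<open>(a,H)-semi-selfsimilarity: the finite-dimensional laws of {Z(a t)} and
  {a^H (x) Z(t)} coincide (it suffices to compare at ordered nonnegative times).\<close>
definition semi_selfsimilar :: "(real \<Rightarrow> nat pmf) \<Rightarrow> real \<Rightarrow> real \<Rightarrow> bool" where
  "semi_selfsimilar \<mu> a H \<longleftrightarrow>
     (\<forall>ts. sorted ts \<longrightarrow> (\<forall>t\<in>set ts. 0 \<le> t) \<longrightarrow>
        levy_fdd \<mu> (map (\<lambda>t. a * t) ts) = bind_pmf (levy_fdd \<mu> ts) (thin_path (a powr H)))"

definition discrete_semistable :: "real \<Rightarrow> real \<Rightarrow> nat pmf \<Rightarrow> bool" where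
  "discrete_semistable a b p \<longleftrightarrow>
     0 < a \<and> a < 1 \<and> 0 < b \<and> b < 1 \<and> (\<exists>\<alpha>. 0 < \<alpha> \<and> \<alpha> \<le> 1 \<and> b = a powr (1 / \<alpha>)) \<and>
     (\<forall>s\<in>{0..1}. pgf p s \<noteq> 0 \<and> pgf p s powr a = pgf p (1 - b + b * s))"

definition ar_step :: "real \<Rightarrow> nat pmf \<Rightarrow> nat \<Rightarrow> nat pmf" where
  "ar_step b e x = map_pmf (\<lambda>(y, z). y + z) (pair_pmf (binomial_pmf x b) e)"

fun ar_path :: "real \<Rightarrow> nat pmf \<Rightarrow> nat pmf \<Rightarrow> nat \<Rightarrow> nat list pmf" where
  "ar_path b e x0 0 = map_pmf (\<lambda>x. [x]) x0"
| "ar_path b e x0 (Suc n) =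
     bind_pmf (ar_path b e x0 n) (\<lambda>xs. map_pmf (\<lambda>y. xs @ [y]) (ar_step b e (last xs)))"

definition ar_marg :: "real \<Rightarrow> nat pmf \<Rightarrow> nat pmf \<Rightarrow> nat \<Rightarrow> nat pmf" where
  "ar_marg b e x0 n = map_pmf (\<lambda>xs. xs ! n) (ar_path b e x0 n)"

definition ar_stationary :: "real \<Rightarrow> nat pmf \<Rightarrow> nat pmf \<Rightarrow> bool" where
  "ar_stationary b e x0 \<longleftrightarrow>
     (\<forall>n k. map_pmf (drop n) (ar_path b e x0 (n + k)) = ar_path b e x0 k)"

end

theory Submission imports Defs begin

text \<open>Let \<open>a = b\<^sup>\<alpha>\<close> and let \<open>P\<close> be the PGF of \<open>Z(1)\<close>. The PGF of \<open>Z(t)\<close> is \<open>P\<^sup>t\<close>, and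
  thinning by \<open>b\<close> substitutes \<open>1 - b + b s\<close> for \<open>s\<close>; so all three properties reduce to the
  functional equation \<open>P(1 - b + b s) = P(s)\<^sup>a\<close> on \<open>[0,1]\<close>. If \<open>X\<^sub>0 \<sim> Z(1)\<close>, the PGF of \<open>X\<^sub>1\<close>
  is \<open>P(1 - b + b s)\<^bsup>1 + (1/a - 1)\<^esup>\<close>, so \<open>X\<^sub>1 \<sim> X\<^sub>0\<close> is exactly the functional equation, and
  a Markov chain started in an invariant law is stationary. For semi-selfsimilarity, thinning a
  sum of independent increments with one Bernoulli sequence thins each increment independently,
  so the one-dimensional scaling \<open>Z(a t) \<sim> b \<otimes> Z(t)\<close> already determines all
  finite-dimensional laws. Laws on \<open>I\<^sub>0\<close> are identified by their PGFs on \<open>[0,1]\<close>.\<close>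

lemma expectation_bind_pmf:
  fixes f :: "'b \<Rightarrow> real"
  assumes "\<And>x. \<bar>f x\<bar> \<le> B"
  shows "measure_pmf.expectation (bind_pmf M N) f =
         measure_pmf.expectation M (\<lambda>y. measure_pmf.expectation (N y) f)"
  unfolding measure_pmf_bind
  by (rule integral_bind[where K="count_space UNIV" and B=B and B'=1])
     (auto simp: assms measure_pmf_in_subprob_algebra measure_pmf.emeasure_space_1)

lemma integrable_pgf:
  fixes s :: real
  assumes "0 \<le> s" "s \<le> 1"
  shows "integrable (measure_pmf p) (\<lambda>n. s ^ n)"
  by (intro measure_pmf.integrable_const_bound[where B=1] AE_I2) (use assms in \<open>auto intro: power_le_one\<close>)

lemma pgf_nonneg: "0 \<le> s \<Longrightarrow> pgf p s \<ge> 0"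
  unfolding pgf_def by (auto intro: integral_nonneg)

lemma pgf_pos:
  assumes "0 < s" "s \<le> 1"
  shows "pgf p s > 0"
proof -
  obtain n where "n \<in> set_pmf p"
    using set_pmf_not_empty[of p] by blast
  moreover have "pgf p s = 0 \<Longrightarrow> \<forall>n\<in>set_pmf p. s ^ n = 0"
    unfolding pgf_def using assms integrable_pgf[of s]
    by (subst (asm) integral_nonneg_eq_0_iff_AE) (auto simp: AE_measure_pmf_iff)
  ultimately show ?thesis
    using assms pgf_nonneg[of s p] by force
qed

lemma pgf_bind_pmf:
  assumes "0 \<le> s" "s \<le> 1"
  shows "pgf (bind_pmf M N) s = measure_pmf.expectation M (\<lambda>y. pgf (N y) s)"
  unfolding pgf_def using assms by (intro expectation_bind_pmf[where B=1]) (auto intro: power_le_one)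

lemma pgf_add_pair_pmf:
  assumes "0 \<le> s" "s \<le> 1"
  shows "pgf (map_pmf (\<lambda>(x, y). x + y) (pair_pmf p q)) s = pgf p s * pgf q s"
proof -
  have "map_pmf (\<lambda>(x, y). x + y) (pair_pmf p q) = bind_pmf p (\<lambda>x. map_pmf ((+) x) q)"
    unfolding pair_pmf_def map_bind_pmf map_return_pmf by (simp add: map_pmf_def)
  then show ?thesis
    using assms by (simp add: pgf_bind_pmf) (simp add: pgf_def power_add)
qed

lemma pgf_binomial_pmf:
  assumes "0 \<le> c" "c \<le> 1"
  shows "pgf (binomial_pmf n c) s = (1 - c + c * s) ^ n"
proof -
  have "pgf (binomial_pmf n c) s = (\<Sum>k\<le>n. s ^ k * pmf (binomial_pmf n c) k)"
    unfolding pgf_def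
    by (rule integral_measure_pmf_real) (use assms in \<open>auto simp: set_pmf_binomial_eq split: if_splits\<close>)
  also have "\<dots> = (\<Sum>k\<le>n. of_nat (n choose k) * (c * s) ^ k * (1 - c) ^ (n - k))"
    using assms by (intro sum.cong) (auto simp: power_mult_distrib)
  also have "\<dots> = (c * s + (1 - c)) ^ n"
    by (rule binomial_ring[symmetric])
  finally show ?thesis by (simp add: algebra_simps)
qed

lemma pgf_thin:
  assumes "0 \<le> c" "c \<le> 1" "0 \<le> s" "s \<le> 1"
  shows "pgf (thin c p) s = pgf p (1 - c + c * s)"
  unfolding thin_def using assms by (simp add: pgf_bind_pmf pgf_binomial_pmf) (simp add: pgf_def)

lemma pgf_sums:
  assumes "0 \<le> s" "s \<le> 1"
  shows "(\<lambda>n. pmf p n * s ^ n) sums pgf p s"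
proof -
  have "integrable (count_space UNIV) (\<lambda>n. pmf p n *\<^sub>R s ^ n)"
    using integrable_pgf[OF assms, of p] unfolding measure_pmf_eq_density
    by (subst (asm) integrable_density) auto
  then have "(\<lambda>n. pmf p n * s ^ n) sums (\<integral>n. pmf p n *\<^sub>R s ^ n \<partial>count_space UNIV)"
    by (auto dest: sums_integral_count_space_nat)
  also have "(\<integral>n. pmf p n *\<^sub>R s ^ n \<partial>count_space UNIV) = pgf p s"
    unfolding pgf_def measure_pmf_eq_density by (subst integral_density) auto
  finally show ?thesis .
qed

lemma bounded_powser_eq_0_imp_coeff_eq_0:
  fixes d :: "nat \<Rightarrow> real"
  assumes bounded: "\<And>n. \<bar>d n\<bar> \<le> B"
    and zero: "\<And>x. 0 < x \<Longrightarrow> x < 1 \<Longrightarrow> (\<lambda>n. d n * x ^ n) sums 0"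
  shows "d k = 0"
proof (induction k rule: less_induct)
  case (less k)
  define g where "g x = (\<Sum>m. d (m + k) * x ^ m)" for x :: real
  have summable: "summable (\<lambda>m. d (m + k) * x ^ m)" if "norm x < 1" for x :: real
  proof (rule summable_comparison_test[where g="\<lambda>m. B * \<bar>x\<bar> ^ m"])
    show "\<exists>N. \<forall>n\<ge>N. norm (d (n + k) * x ^ n) \<le> B * \<bar>x\<bar> ^ n"
      using bounded by (auto simp: abs_mult power_abs intro!: mult_right_mono)
    show "summable (\<lambda>m. B * \<bar>x\<bar> ^ m)"
      using that by (intro summable_mult summable_geometric) auto
  qed
  have "(g \<longlongrightarrow> d (0 + k)) (at 0)"
    by (rule powser_limit_0[where s=1]) (auto simp: g_def intro!: summable_sums summable)
  then have lim: "(g \<longlongrightarrow> d k) (at_right 0)"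
    by (simp add: filterlim_at_split)
  have "g x = 0" if "0 < x" "x < 1" for x
  proof -
    have "(\<lambda>m. d (m + k) * x ^ (m + k)) sums (0 - (\<Sum>n<k. d n * x ^ n))"
      using sums_split_initial_segment[OF zero[OF that], of k] by simp
    also have "(\<Sum>n<k. d n * x ^ n) = 0"
      using less by (intro sum.neutral) auto
    finally have "(\<lambda>m. x ^ k * (d (m + k) * x ^ m)) sums (x ^ k * 0)"
      by (simp add: power_add algebra_simps)
    then have "(\<lambda>m. d (m + k) * x ^ m) sums 0"
      using that by (subst (asm) sums_mult_iff) auto
    then show ?thesis
      unfolding g_def by (rule sums_unique[symmetric])
  qed
  then have "eventually (\<lambda>x. g x = 0) (at_right 0)"
    unfolding eventually_at_right_field by (intro exI[of _ 1]) auto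
  then have "(g \<longlongrightarrow> 0) (at_right 0)"
    by (rule tendsto_eventually)
  from tendsto_unique[OF _ lim this] show ?case by simp
qed

lemma pmf_eq_iff_pgf_eq: "p = q \<longleftrightarrow> (\<forall>s\<in>{0..1}. pgf p s = pgf q s)"
proof (intro iffI pmf_eqI)
  fix k
  assume eq: "\<forall>s\<in>{0..1}. pgf p s = pgf q s"
  have "(\<lambda>n. pmf p n - pmf q n) k = 0"
  proof (rule bounded_powser_eq_0_imp_coeff_eq_0)
    show "\<bar>pmf p n - pmf q n\<bar> \<le> 1" for n
      using pmf_le_1[of p n] pmf_le_1[of q n] pmf_nonneg[of p n] pmf_nonneg[of q n] by linarith
    fix x :: real assume "0 < x" "x < 1"
    then have "(\<lambda>n. pmf p n * x ^ n - pmf q n * x ^ n) sums (pgf p x - pgf q x)"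
      by (intro sums_diff pgf_sums) auto
    then show "(\<lambda>n. (pmf p n - pmf q n) * x ^ n) sums 0"
      using eq \<open>0 < x\<close> \<open>x < 1\<close> by (simp add: algebra_simps)
  qed
  then show "pmf p k = pmf q k" by simp
qed simp

lemma levy_fdd_aux_scale:
  assumes scale: "\<And>t. 0 \<le> t \<Longrightarrow> \<mu> (a * t) = thin c (\<mu> t)"
    and "sorted ts" "\<forall>t\<in>set ts. t0 \<le> t"
  shows "levy_fdd_aux \<mu> (a * t0) w0 (map (\<lambda>t. a * t) ts) =
         bind_pmf (levy_fdd_aux \<mu> t0 z0 ts) (thin_path_aux c z0 w0)"
  using assms(2,3)
proof (induction ts arbitrary: t0 z0 w0)
  case Nil
  then show ?case by (simp add: bind_return_pmf)
next
  case (Cons t ts)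
  have IH: "levy_fdd_aux \<mu> (a * t) w (map (\<lambda>t. a * t) ts) =
      bind_pmf (levy_fdd_aux \<mu> t z ts) (thin_path_aux c z w)" for z w
    using Cons by (intro Cons.IH) auto
  have "bind_pmf (levy_fdd_aux \<mu> t0 z0 (t # ts)) (thin_path_aux c z0 w0) =
     bind_pmf (\<mu> (t - t0)) (\<lambda>d. bind_pmf (levy_fdd_aux \<mu> t (z0 + d) ts)
        (\<lambda>zs. bind_pmf (binomial_pmf d c) (\<lambda>e.
           map_pmf (\<lambda>ws. (w0 + e) # ws) (thin_path_aux c (z0 + d) (w0 + e) zs))))"
    by (simp add: bind_assoc_pmf bind_map_pmf)
  also have "\<dots> = bind_pmf (\<mu> (t - t0)) (\<lambda>d. bind_pmf (binomial_pmf d c) (\<lambda>e.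
        map_pmf (\<lambda>ws. (w0 + e) # ws)
          (bind_pmf (levy_fdd_aux \<mu> t (z0 + d) ts) (thin_path_aux c (z0 + d) (w0 + e)))))"
    by (subst bind_commute_pmf) (simp add: map_bind_pmf)
  also have "\<dots> = bind_pmf (\<mu> (t - t0)) (\<lambda>d. bind_pmf (binomial_pmf d c) (\<lambda>e.
        map_pmf (\<lambda>ws. (w0 + e) # ws) (levy_fdd_aux \<mu> (a * t) (w0 + e) (map (\<lambda>t. a * t) ts))))"
    by (simp add: IH[symmetric])
  also have "\<dots> = bind_pmf (thin c (\<mu> (t - t0))) (\<lambda>e.
        map_pmf (\<lambda>ws. (w0 + e) # ws) (levy_fdd_aux \<mu> (a * t) (w0 + e) (map (\<lambda>t. a * t) ts)))"
    by (simp add: thin_def bind_assoc_pmf)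
  also have "\<dots> = levy_fdd_aux \<mu> (a * t0) w0 (map (\<lambda>t. a * t) (t # ts))"
    using scale[of "t - t0"] Cons.prems by (simp add: right_diff_distrib)
  finally show ?case ..
qed

lemma semi_selfsimilar_iff_marginal_scaling:
  "semi_selfsimilar \<mu> a H \<longleftrightarrow> (\<forall>t\<ge>0. \<mu> (a * t) = thin (a powr H) (\<mu> t))"
proof
  assume "\<forall>t\<ge>0. \<mu> (a * t) = thin (a powr H) (\<mu> t)"
  then have "levy_fdd_aux \<mu> (a * 0) 0 (map (\<lambda>t. a * t) ts) =
             bind_pmf (levy_fdd_aux \<mu> 0 0 ts) (thin_path_aux (a powr H) 0 0)"
    if "sorted ts" "\<forall>t\<in>set ts. 0 \<le> t" for ts
    using that by (intro levy_fdd_aux_scale) auto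
  then show "semi_selfsimilar \<mu> a H"
    unfolding semi_selfsimilar_def levy_fdd_def thin_path_def by simp
next
  assume ssi: "semi_selfsimilar \<mu> a H"
  show "\<forall>t\<ge>0. \<mu> (a * t) = thin (a powr H) (\<mu> t)"
  proof (intro allI impI)
    fix t :: real assume "0 \<le> t"
    then have "levy_fdd \<mu> [a * t] = bind_pmf (levy_fdd \<mu> [t]) (thin_path (a powr H))"
      using ssi[unfolded semi_selfsimilar_def, rule_format, of "[t]"] by simp
    then have "map_pmf hd (map_pmf (\<lambda>d. [d]) (\<mu> (a * t))) =
               map_pmf hd (map_pmf (\<lambda>d. [d]) (thin (a powr H) (\<mu> t)))"
      unfolding levy_fdd_def thin_path_def thin_def
      by (simp add: map_pmf_def bind_return_pmf bind_assoc_pmf)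
    then show "\<mu> (a * t) = thin (a powr H) (\<mu> t)"
      by (simp add: map_pmf_comp)
  qed
qed

lemma pgf_levy:
  assumes "levy_process \<mu>" "0 < t" "0 \<le> s" "s \<le> 1"
  shows "pgf (\<mu> t) s = pgf (\<mu> 1) s powr t"
  using assms unfolding levy_process_def by (meson atLeastAtMost_iff)

lemma levy_marginal_scaling_iff_pgf:
  assumes levy: "levy_process \<mu>" and "0 < a" "0 \<le> c" "c \<le> 1"
  shows "(\<forall>t\<ge>0. \<mu> (a * t) = thin c (\<mu> t)) \<longleftrightarrow>
         (\<forall>s\<in>{0..1}. pgf (\<mu> 1) (1 - c + c * s) = pgf (\<mu> 1) s powr a)"
proof
  assume "\<forall>t\<ge>0. \<mu> (a * t) = thin c (\<mu> t)"
  then have "\<mu> a = thin c (\<mu> 1)"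
    by (metis mult.right_neutral zero_le_one)
  then have "pgf (\<mu> 1) (1 - c + c * s) = pgf (\<mu> 1) s powr a" if "0 \<le> s" "s \<le> 1" for s
    using assms that pgf_thin[of c s "\<mu> 1"] pgf_levy[OF levy, of a s] by simp
  then show "\<forall>s\<in>{0..1}. pgf (\<mu> 1) (1 - c + c * s) = pgf (\<mu> 1) s powr a"
    by simp
next
  assume fe: "\<forall>s\<in>{0..1}. pgf (\<mu> 1) (1 - c + c * s) = pgf (\<mu> 1) s powr a"
  show "\<forall>t\<ge>0. \<mu> (a * t) = thin c (\<mu> t)"
  proof (intro allI impI)
    fix t :: real assume "0 \<le> t"
    show "\<mu> (a * t) = thin c (\<mu> t)"
    proof (cases "t = 0")
      case True
      \<comment> \<open>\<open>pgf_levy\<close> says nothing at \<open>t = 0\<close> (where \<open>P(0) = 0\<close> would meet \<open>0 powr 0 = 0\<close>); use \<open>Z(0) = 0\<close>.\<close>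
      then show ?thesis
        using levy assms(3,4) by (simp add: levy_process_def thin_def bind_return_pmf binomial_pmf_0)
    next
      case False
      with \<open>0 \<le> t\<close> have "0 < t" by simp
      have "pgf (thin c (\<mu> t)) s = pgf (\<mu> (a * t)) s" if "0 \<le> s" "s \<le> 1" for s
      proof -
        have "0 \<le> 1 - c + c * s" "1 - c + c * s \<le> 1"
          using assms that by (auto intro: add_nonneg_nonneg simp: mult_left_le)
        then have "pgf (thin c (\<mu> t)) s = pgf (\<mu> 1) (1 - c + c * s) powr t"
          using assms that \<open>0 < t\<close> by (simp add: pgf_thin pgf_levy[OF levy, of t])
        also have "\<dots> = pgf (\<mu> 1) s powr (a * t)"
          using fe that by (simp add: powr_powr)
        also have "\<dots> = pgf (\<mu> (a * t)) s"
          using assms that \<open>0 < t\<close> by (simp add: pgf_levy[OF levy, of "a * t"])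
        finally show ?thesis .
      qed
      then show ?thesis
        unfolding pmf_eq_iff_pgf_eq by simp
    qed
  qed
qed

lemma ar_path_length: "xs \<in> set_pmf (ar_path b e x0 n) \<Longrightarrow> length xs = Suc n"
  by (induction n arbitrary: xs) auto

lemma ar_marg_0: "ar_marg b e x0 0 = x0"
  unfolding ar_marg_def by (simp add: map_pmf_comp)

lemma ar_marg_Suc: "ar_marg b e x0 (Suc n) = bind_pmf (ar_marg b e x0 n) (ar_step b e)"
proof -
  have "ar_marg b e x0 (Suc n) = bind_pmf (ar_path b e x0 n) (\<lambda>xs. ar_step b e (xs ! n))"
    unfolding ar_marg_def
  proof (simp add: map_bind_pmf map_pmf_comp, intro bind_pmf_cong refl)
    fix xs assume "xs \<in> set_pmf (ar_path b e x0 n)"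
    then have "length xs = Suc n" by (rule ar_path_length)
    moreover from this have "last xs = xs ! n"
      by (metis last_conv_nth diff_Suc_1 list.size(3) nat.distinct(1))
    ultimately show "map_pmf (\<lambda>y. (xs @ [y]) ! Suc n) (ar_step b e (last xs)) = ar_step b e (xs ! n)"
      by (simp add: nth_append)
  qed
  then show ?thesis
    unfolding ar_marg_def by (simp add: bind_map_pmf)
qed

lemma ar_marg_invariant:
  assumes "bind_pmf x0 (ar_step b e) = x0"
  shows "ar_marg b e x0 n = x0"
  by (induction n) (use assms in \<open>auto simp: ar_marg_0 ar_marg_Suc\<close>)

lemma ar_path_drop_eq_ar_marg:
  "map_pmf (drop n) (ar_path b e x0 n) = map_pmf (\<lambda>x. [x]) (ar_marg b e x0 n)"
  unfolding ar_marg_def map_pmf_comp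
  by (intro map_pmf_cong refl) (auto dest!: ar_path_length simp flip: Cons_nth_drop_Suc)

lemma ar_stationary_iff_invariant:
  "ar_stationary b e x0 \<longleftrightarrow> bind_pmf x0 (ar_step b e) = x0"
proof
  assume "ar_stationary b e x0"
  then have "map_pmf (\<lambda>x. [x]) (ar_marg b e x0 1) = map_pmf (\<lambda>x. [x]) x0"
    unfolding ar_stationary_def by (metis add_0_right ar_path.simps(1) ar_path_drop_eq_ar_marg)
  then have "map_pmf hd (map_pmf (\<lambda>x. [x]) (ar_marg b e x0 1)) = map_pmf hd (map_pmf (\<lambda>x. [x]) x0)"
    by simp
  then have "ar_marg b e x0 1 = x0"
    by (simp add: map_pmf_comp)
  then show "bind_pmf x0 (ar_step b e) = x0"
    by (simp add: ar_marg_Suc[of _ _ _ 0, simplified] ar_marg_0)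
next
  assume invariant: "bind_pmf x0 (ar_step b e) = x0"
  show "ar_stationary b e x0"
    unfolding ar_stationary_def
  proof (intro allI)
    fix n k
    show "map_pmf (drop n) (ar_path b e x0 (n + k)) = ar_path b e x0 k"
    proof (induction k)
      case 0
      then show ?case
        using ar_path_drop_eq_ar_marg ar_marg_invariant[OF invariant] by simp
    next
      case (Suc k)
      have "map_pmf (drop n) (ar_path b e x0 (n + Suc k)) =
         bind_pmf (ar_path b e x0 (n + k))
           (\<lambda>xs. map_pmf (\<lambda>y. drop n xs @ [y]) (ar_step b e (last (drop n xs))))"
        by (auto simp: map_bind_pmf map_pmf_comp dest!: ar_path_length
                 intro!: bind_pmf_cong map_pmf_cong last_drop[symmetric])
      also have "\<dots> = bind_pmf (map_pmf (drop n) (ar_path b e x0 (n + k)))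
                        (\<lambda>ys. map_pmf (\<lambda>y. ys @ [y]) (ar_step b e (last ys)))"
        by (simp add: bind_map_pmf)
      finally show ?case
        using Suc by simp
    qed
  qed
qed

lemma pgf_bind_ar_step:
  assumes "0 \<le> b" "b \<le> 1" "0 \<le> s" "s \<le> 1"
  shows "pgf (bind_pmf x0 (ar_step b e)) s = pgf x0 (1 - b + b * s) * pgf e s"
  using assms unfolding ar_step_def
  by (simp add: pgf_bind_pmf pgf_add_pair_pmf pgf_binomial_pmf) (simp add: pgf_def)

lemma ar_invariant_iff_pgf:
  assumes levy: "levy_process \<mu>" and "0 < a" "a < 1" "0 < b" "b < 1"
  shows "bind_pmf (\<mu> 1) (ar_step b (thin b (\<mu> (1 / a - 1)))) = \<mu> 1 \<longleftrightarrow>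
         (\<forall>s\<in>{0..1}. pgf (\<mu> 1) (1 - b + b * s) = pgf (\<mu> 1) s powr a)"
proof -
  define P where "P = pgf (\<mu> 1)"
  have u: "0 < 1 - b + b * s" "1 - b + b * s \<le> 1" if "0 \<le> s" "s \<le> 1" for s
    using assms that by (auto intro: add_pos_nonneg simp: mult_left_le)
  have step: "pgf (bind_pmf (\<mu> 1) (ar_step b (thin b (\<mu> (1 / a - 1))))) s =
              P (1 - b + b * s) powr (1 / a)" if "0 \<le> s" "s \<le> 1" for s
  proof -
    have "0 < 1 / a - 1" "0 < P (1 - b + b * s)"
      using assms u[OF that] by (auto simp: P_def pgf_pos)
    then have "P (1 - b + b * s) * P (1 - b + b * s) powr (1 / a - 1) = P (1 - b + b * s) powr (1 / a)"
      using powr_add[of "P (1 - b + b * s)" 1 "1 / a - 1"] by simp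
    then show ?thesis
      using assms that u[OF that]
      by (simp add: pgf_bind_ar_step pgf_thin pgf_levy[OF levy, of "1 / a - 1"] P_def[symmetric])
  qed
  have pointwise: "P (1 - b + b * s) powr (1 / a) = P s \<longleftrightarrow> P (1 - b + b * s) = P s powr a"
    if "0 \<le> s" "s \<le> 1" for s
  proof -
    have "P (1 - b + b * s) > 0" "P s \<ge> 0"
      using u[OF that] that by (auto simp: P_def pgf_pos pgf_nonneg)
    then show ?thesis
      using \<open>0 < a\<close> powr_powr[of "P (1 - b + b * s)" "1 / a" a] powr_powr[of "P s" a "1 / a"]
      by auto
  qed
  show ?thesis
    unfolding pmf_eq_iff_pgf_eq using step pointwise by (auto simp: P_def)
qed

lemma discrete_semistableI:
  assumes "0 < a" "a < 1" "0 < b" "b < 1" "0 < \<alpha>" "\<alpha> \<le> 1" "b = a powr (1 / \<alpha>)"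
    and "\<forall>s\<in>{0..1}. pgf p (1 - b + b * s) = pgf p s powr a"
  shows "discrete_semistable a b p"
  unfolding discrete_semistable_def
proof (intro conjI ballI)
  show "\<exists>\<alpha>. 0 < \<alpha> \<and> \<alpha> \<le> 1 \<and> b = a powr (1 / \<alpha>)"
    using assms(5-7) by blast
  fix s :: real assume "s \<in> {0..1}"
  then have "0 < 1 - b + b * s" "1 - b + b * s \<le> 1"
    using assms(3,4) by (auto intro: add_pos_nonneg simp: mult_left_le)
  then show "pgf p s \<noteq> 0" "pgf p s powr a = pgf p (1 - b + b * s)"
    using assms(8) \<open>s \<in> {0..1}\<close> pgf_pos[of "1 - b + b * s" p] by auto
qed (fact assms)+

theorem theorem2p4:
  fixes b \<alpha> :: real and \<mu> :: "real \<Rightarrow> nat pmf"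
  assumes "0 < b" and "b < 1" and "0 < \<alpha>" and "\<alpha> \<le> 1"
    and "levy_process \<mu>"
  shows "(semi_selfsimilar \<mu> (b powr \<alpha>) (1 / \<alpha>) \<longrightarrow>
            ar_stationary b (thin b (\<mu> (b powr (- \<alpha>) - 1))) (\<mu> 1) \<and>
            (\<forall>n. discrete_semistable (b powr \<alpha>) b
                    (ar_marg b (thin b (\<mu> (b powr (- \<alpha>) - 1))) (\<mu> 1) n)))
       \<and> (ar_stationary b (thin b (\<mu> (b powr (- \<alpha>) - 1))) (\<mu> 1) \<longrightarrow>
            (\<forall>n. discrete_semistable (b powr \<alpha>) b
                    (ar_marg b (thin b (\<mu> (b powr (- \<alpha>) - 1))) (\<mu> 1) n)) \<and>
            semi_selfsimilar \<mu> (b powr \<alpha>) (1 / \<alpha>))"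
proof -
  define a where "a = b powr \<alpha>"
  let ?e = "thin b (\<mu> (1 / a - 1))"
  let ?functional_eq = "\<forall>s\<in>{0..1}. pgf (\<mu> 1) (1 - b + b * s) = pgf (\<mu> 1) s powr a"
  have a: "0 < a" "a < 1"
    using assms powr_less_mono2[of \<alpha> b 1] by (auto simp: a_def)
  have b_eq: "a powr (1 / \<alpha>) = b" and innovation: "b powr (- \<alpha>) - 1 = 1 / a - 1"
    using assms by (simp_all add: a_def powr_powr powr_minus_divide)
  have ssi: "semi_selfsimilar \<mu> a (1 / \<alpha>) \<longleftrightarrow> ?functional_eq"
    unfolding semi_selfsimilar_iff_marginal_scaling b_eq
    using levy_marginal_scaling_iff_pgf[OF assms(5) \<open>0 < a\<close>] assms(1,2) by simp
  have stationary: "ar_stationary b ?e (\<mu> 1) \<longleftrightarrow> ?functional_eq"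
    unfolding ar_stationary_iff_invariant by (rule ar_invariant_iff_pgf[OF assms(5) a assms(1,2)])
  have marginals: "discrete_semistable a b (ar_marg b ?e (\<mu> 1) n)" if ?functional_eq for n
  proof -
    have "ar_marg b ?e (\<mu> 1) n = \<mu> 1"
      using that stationary by (simp add: ar_marg_invariant ar_stationary_iff_invariant)
    then show ?thesis
      using discrete_semistableI[OF a assms(1-4) b_eq[symmetric] that] by simp
  qed
  show ?thesis
    unfolding a_def[symmetric] innovation ssi stationary using marginals by blast
qed

end
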